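(* Fix a bounding strategy: degree bound $\phi$, explicit bound $k$, or node-weighted with cost $c$. Let $T$ be a non-degenerate FQST that is feasible for this strategy and that contains a pair of overlapping edges with common node $v$. Assume that either the strategy is the explicit bound or the node-weighted one, or the strategy is the degree bound and $v$ is not a Steiner point of degree exactly $\phi$. Then $T$ is not an MFQST for that strategy.
   Context: Let $Z=\{z_1,\dots,z_n\}\subset\mathbb{R}^2$ ($n\ge 1$) be a set of sources and $z_{BS}\in\mathbb{R}^2\setminus Z$ a sink; each source has supply $1$. A flow-dependent quadratic Steiner tree (FQST) consists of a finite set $S\subset\mathbb{R}^2$ of Steiner points and a tree $T$ with vertex set $Z\cup S\cup\{z_{BS}\}$ whose edges are directed towards $z_{BS}$. Every node other than the sink has exactly one out-edge, and the sink has none. Each edge $e$ carries a positive flow $f(e)$ such that: - at each source, the flow on its out-edge minus the total flow on its in-edges equals $1$; - at each Steiner point, the out-flow equals the total in-flow; - the sink receives total flow $n$. The cost is $L(T)=\sum_{e\in E(T)} f(e)|e|^2$. $T$ is degenerate if some edge has length $0$. Two edges are overlapping if they share a common endpoint and one of them, as a segment, is contained in the other. Bounding strategies and MFQSTs: - Degree bound: for a fixed integer $\phi\ge3$, every Steiner point has degree $\ge\phi$; an MFQST minimises $L$ among such FQSTs. - Explicit bound: for a fixed $k$, $|S|\le k$; an MFQST minimises $L$ among such FQSTs. - Node-weighted: for a fixed $c>0$, an MFQST minimises $L_c(T)=L(T)+c|S|$ over all FQSTs. *)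

theory Defs
  imports "HOL-Analysis.Analysis"
begin

text \<open>Every non-sink vertex v has exactly one out-edge, namely (v, succ v), carrying
the flow  flow v.\<close>

record fqst =
  V     :: "nat set"
  Zv    :: "nat set"
  Sv    :: "nat set"
  sink  :: nat
  pos   :: "nat \<Rightarrow> real^2"
  succ  :: "nat \<Rightarrow> nat"
  flow  :: "nat \<Rightarrow> real"

definition in_nbrs :: "fqst \<Rightarrow> nat \<Rightarrow> nat set" where
  "in_nbrs T v = {u \<in> V T - {sink T}. succ T u = v}"

definition is_fqst :: "(real^2) set \<Rightarrow> real^2 \<Rightarrow> fqst \<Rightarrow> bool" where
  "is_fqst Z zBS T \<longleftrightarrow>
     finite (V T) \<and>
     V T = Zv T \<union> Sv T \<union> {sink T} \<and>
     Zv T \<inter> Sv T = {} \<and> sink T \<notin> Zv T \<and> sink T \<notin> Sv T \<and>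
     inj_on (pos T) (Zv T) \<and> pos T ` Zv T = Z \<and> pos T (sink T) = zBS \<and>
     (\<forall>v \<in> V T - {sink T}. succ T v \<in> V T) \<and>
     (\<forall>v \<in> V T. \<exists>m. (succ T ^^ m) v = sink T) \<and>
     (\<forall>v \<in> V T - {sink T}. flow T v > 0) \<and>
     (\<forall>v \<in> Zv T. flow T v - (\<Sum>u \<in> in_nbrs T v. flow T u) = 1) \<and>
     (\<forall>v \<in> Sv T. flow T v = (\<Sum>u \<in> in_nbrs T v. flow T u)) \<and>
     (\<Sum>u \<in> in_nbrs T (sink T). flow T u) = real (card Z)"

definition cost :: "fqst \<Rightarrow> real" where
  "cost T = (\<Sum>v \<in> V T - {sink T}. flow T v * (norm (pos T v - pos T (succ T v)))\<^sup>2)"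

definition degree :: "fqst \<Rightarrow> nat \<Rightarrow> nat" where
  "degree T v = card (in_nbrs T v) + (if v = sink T then 0 else 1)"

definition degenerate :: "fqst \<Rightarrow> bool" where
  "degenerate T \<longleftrightarrow> (\<exists>v \<in> V T - {sink T}. pos T v = pos T (succ T v))"

definition adjacent :: "fqst \<Rightarrow> nat \<Rightarrow> nat \<Rightarrow> bool" where
  "adjacent T a w \<longleftrightarrow> a \<in> V T \<and> w \<in> V T \<and>
     ((a \<noteq> sink T \<and> succ T a = w) \<or> (w \<noteq> sink T \<and> succ T w = a))"

definition overlapping_at :: "fqst \<Rightarrow> nat \<Rightarrow> bool" where
  "overlapping_at T w \<longleftrightarrow> (\<exists>a b. a \<noteq> b \<and> adjacent T a w \<and> adjacent T b w \<and>
      closed_segment (pos T w) (pos T a) \<subseteq> closed_segment (pos T w) (pos T b))"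

datatype strategy = DegreeBound nat | ExplicitBound nat | NodeWeighted real

definition valid_strategy :: "strategy \<Rightarrow> bool" where
  "valid_strategy s = (case s of DegreeBound \<phi> \<Rightarrow> \<phi> \<ge> 3 | ExplicitBound k \<Rightarrow> True
                        | NodeWeighted c \<Rightarrow> c > 0)"

definition feasible :: "strategy \<Rightarrow> fqst \<Rightarrow> bool" where
  "feasible s T = (case s of DegreeBound \<phi> \<Rightarrow> (\<forall>x \<in> Sv T. degree T x \<ge> \<phi>)
                    | ExplicitBound k \<Rightarrow> card (Sv T) \<le> k
                    | NodeWeighted c \<Rightarrow> True)"

definition strategy_cost :: "strategy \<Rightarrow> fqst \<Rightarrow> real" where
  "strategy_cost s T = (case s of NodeWeighted c \<Rightarrow> cost T + c * real (card (Sv T))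
                        | _ \<Rightarrow> cost T)"

definition is_MFQST :: "(real^2) set \<Rightarrow> real^2 \<Rightarrow> strategy \<Rightarrow> fqst \<Rightarrow> bool" where
  "is_MFQST Z zBS s T \<longleftrightarrow> is_fqst Z zBS T \<and> feasible s T \<and>
     (\<forall>T'. is_fqst Z zBS T' \<and> feasible s T' \<longrightarrow> strategy_cost s T \<le> strategy_cost s T')"

end

theory Submission
  imports Defs
begin

text \<open>Let the overlapping edges at v be those to a and b, with a lying on the segment from v
  to b. If a and b are both children of v, reattach b below a; if v is the parent of one of
  them, reattach the child of v directly to the parent of v. Both modifications keep the set of
  Steiner points, so the strategy cost changes exactly as the quadratic cost, and feasibility is
  only at risk at v, which loses one edge. In the first case the triangle v a b has a straight
  angle at a, in the second the child and the parent of v lie on the same ray from v; by the law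
  of cosines the quadratic cost strictly drops in both.

  The strict drop fails in two degenerate situations, both handled by the first-order optimality
  of Steiner points (each is the flow-weighted centroid of its neighbours): a and b coincide,
  in which case one of them is a Steiner point and reattaching is cost-neutral; or v has a single
  child carrying all of its flow, in which case v is a Steiner point with its two neighbours on
  the same side, so it cannot be their centroid.\<close>

lemma in_nbrs_iff: "u \<in> in_nbrs T z \<longleftrightarrow> u \<in> V T \<and> u \<noteq> sink T \<and> succ T u = z"
  by (auto simp: in_nbrs_def)

lemma finite_in_nbrs: "finite (V T) \<Longrightarrow> finite (in_nbrs T z)"
  unfolding in_nbrs_def by simp

lemma
  assumes "is_fqst Z zBS T"
  shows fqst_finite: "finite (V T)"
    and fqst_vertices: "V T = Zv T \<union> Sv T \<union> {sink T}"
    and fqst_sink_notin: "sink T \<notin> Zv T" "sink T \<notin> Sv T"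
    and fqst_inj_sources: "inj_on (pos T) (Zv T)"
    and fqst_succ_in_V: "\<And>u. u \<in> V T \<Longrightarrow> u \<noteq> sink T \<Longrightarrow> succ T u \<in> V T"
    and fqst_reaches_sink: "\<And>u. u \<in> V T \<Longrightarrow> \<exists>m. (succ T ^^ m) u = sink T"
    and fqst_flow_pos: "\<And>u. u \<in> V T \<Longrightarrow> u \<noteq> sink T \<Longrightarrow> 0 < flow T u"
    and fqst_source_flow: "\<And>u. u \<in> Zv T \<Longrightarrow> flow T u = 1 + (\<Sum>w\<in>in_nbrs T u. flow T w)"
    and fqst_steiner_flow: "\<And>u. u \<in> Sv T \<Longrightarrow> flow T u = (\<Sum>w\<in>in_nbrs T u. flow T w)"
  using assms unfolding is_fqst_def by auto

definition depth :: "fqst \<Rightarrow> nat \<Rightarrow> nat" where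
  "depth T u = (LEAST m. (succ T ^^ m) u = sink T)"

lemma depth_succ:
  assumes T: "is_fqst Z zBS T" and u: "u \<in> V T" "u \<noteq> sink T"
  shows "depth T u = Suc (depth T (succ T u))"
proof -
  let ?reach = "\<lambda>u m. (succ T ^^ m) u = sink T"
  have reach_Suc: "?reach u (Suc m) \<longleftrightarrow> ?reach (succ T u) m" for m
    by (simp add: funpow_Suc_right del: funpow.simps)
  obtain m where "?reach u m" using fqst_reaches_sink[OF T u(1)] by blast
  then have reach_u: "?reach u (depth T u)" unfolding depth_def by (rule LeastI)
  have "depth T u \<noteq> 0"
  proof
    assume "depth T u = 0"
    with reach_u u(2) show False by simp
  qed
  then obtain k where k: "depth T u = Suc k" using not0_implies_Suc by blast
  with reach_u reach_Suc have reach_k: "?reach (succ T u) k" by simp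
  then have lower: "depth T (succ T u) \<le> k" unfolding depth_def by (rule Least_le)
  have "?reach (succ T u) (depth T (succ T u))"
    unfolding depth_def using reach_k by (rule LeastI)
  then have "?reach u (Suc (depth T (succ T u)))" using reach_Suc by simp
  then have "depth T u \<le> Suc (depth T (succ T u))" unfolding depth_def by (rule Least_le)
  with lower k show ?thesis by simp
qed

lemma succ_neq_self:
  assumes "is_fqst Z zBS T" "u \<in> V T" "u \<noteq> sink T"
  shows "succ T u \<noteq> u"
  using depth_succ[OF assms] by auto

lemma funpow_reaches_by_measure:
  fixes \<mu> :: "'a \<Rightarrow> nat"
  assumes "\<And>u. u \<in> A \<Longrightarrow> u \<noteq> s \<Longrightarrow> f u \<in> A \<and> \<mu> (f u) < \<mu> u" and "u \<in> A"
  shows "\<exists>m. (f ^^ m) u = s"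
  using assms(2)
proof (induction "\<mu> u" arbitrary: u rule: less_induct)
  case less
  show ?case
  proof (cases "u = s")
    case True then show ?thesis by (intro exI[of _ 0]) simp
  next
    case False
    with assms(1) less.prems have "f u \<in> A" "\<mu> (f u) < \<mu> u" by auto
    with less.hyps obtain m where "(f ^^ m) (f u) = s" by blast
    then have "(f ^^ Suc m) u = s" by (simp add: funpow_Suc_right del: funpow.simps)
    then show ?thesis by blast
  qed
qed

text \<open>The measure 2 * depth u + [u = x] decreases along the new successor function.\<close>
lemma reaches_sink_reattach:
  assumes T: "is_fqst Z zBS T" and x: "x \<in> V T" "x \<noteq> sink T"
    and y: "y \<in> V T" "y \<noteq> x" "depth T y \<le> depth T x" and u: "u \<in> V T"
  shows "\<exists>m. ((succ T)(x := y) ^^ m) u = sink T"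
proof (rule funpow_reaches_by_measure[where \<mu> = "\<lambda>u. 2 * depth T u + (if u = x then 1 else 0)"])
  fix u assume u: "u \<in> V T" "u \<noteq> sink T"
  show "((succ T)(x := y)) u \<in> V T \<and>
      2 * depth T (((succ T)(x := y)) u) + (if ((succ T)(x := y)) u = x then 1 else 0)
      < 2 * depth T u + (if u = x then 1 else 0)"
    using y depth_succ[OF T u] fqst_succ_in_V[OF T u] by auto
qed (rule u)

definition inflow :: "fqst \<Rightarrow> nat \<Rightarrow> real" where
  "inflow T z = (\<Sum>u\<in>in_nbrs T z. flow T u)"

definition net_flow :: "fqst \<Rightarrow> nat \<Rightarrow> real" where
  "net_flow T z = (if z = sink T then 0 else flow T z) - inflow T z"

lemma is_fqst_rewire:
  assumes T: "is_fqst Z zBS T"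
    and same: "V T' = V T" "Zv T' = Zv T" "Sv T' = Sv T" "sink T' = sink T" "pos T' = pos T"
    and succ: "\<And>u. u \<in> V T \<Longrightarrow> u \<noteq> sink T \<Longrightarrow> succ T' u \<in> V T"
    and reach: "\<And>u. u \<in> V T \<Longrightarrow> \<exists>m. (succ T' ^^ m) u = sink T"
    and flow: "\<And>u. u \<in> V T \<Longrightarrow> u \<noteq> sink T \<Longrightarrow> 0 < flow T' u"
    and net: "\<And>z. z \<in> V T \<Longrightarrow> net_flow T' z = net_flow T z"
  shows "is_fqst Z zBS T'"
proof -
  have V: "Zv T \<subseteq> V T" "Sv T \<subseteq> V T" "sink T \<in> V T" using fqst_vertices[OF T] by auto
  have off_sink: "flow T' v - inflow T' v = flow T v - inflow T v"
    if "v \<in> V T" "v \<noteq> sink T" for v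
    using that net[of v] unfolding net_flow_def same(4) by simp
  have Z': "flow T' v - inflow T' v = 1" if "v \<in> Zv T" for v
    using that off_sink[of v] V fqst_sink_notin[OF T] fqst_source_flow[OF T, of v]
    unfolding inflow_def by auto
  have S': "flow T' v = inflow T' v" if "v \<in> Sv T" for v
    using that off_sink[of v] V fqst_sink_notin[OF T] fqst_steiner_flow[OF T, of v]
    unfolding inflow_def by auto
  have sink': "inflow T' (sink T) = real (card Z)"
    using net[of "sink T"] V T unfolding net_flow_def same(4) inflow_def is_fqst_def by simp
  have same_data: "finite (V T) \<and> V T = Zv T \<union> Sv T \<union> {sink T} \<and> Zv T \<inter> Sv T = {} \<and>
      sink T \<notin> Zv T \<and> sink T \<notin> Sv T \<and> inj_on (pos T) (Zv T) \<and> pos T ` Zv T = Z \<and>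
      pos T (sink T) = zBS"
    using T unfolding is_fqst_def by blast
  show ?thesis
    unfolding is_fqst_def same inflow_def[symmetric]
    using same_data Z' S' sink' succ reach flow by (intro conjI ballI) (blast+)
qed

definition edge_cost :: "fqst \<Rightarrow> nat \<Rightarrow> real" where
  "edge_cost T u = flow T u * (norm (pos T u - pos T (succ T u)))\<^sup>2"

lemma cost_local_change:
  assumes "finite (V T)" "V T' = V T" "sink T' = sink T" "A \<subseteq> V T - {sink T}"
    and "\<And>u. u \<in> V T - {sink T} - A \<Longrightarrow> edge_cost T' u = edge_cost T u"
  shows "cost T' = cost T + (\<Sum>u\<in>A. edge_cost T' u - edge_cost T u)"
proof -
  have "cost T' - cost T = (\<Sum>u\<in>V T - {sink T}. edge_cost T' u - edge_cost T u)"
    by (simp add: cost_def edge_cost_def assms(2,3) sum_subtractf)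
  also have "\<dots> = (\<Sum>u\<in>A. edge_cost T' u - edge_cost T u)"
    by (rule sum.mono_neutral_right) (use assms in auto)
  finally show ?thesis by simp
qed

definition reroute :: "fqst \<Rightarrow> nat \<Rightarrow> nat \<Rightarrow> nat \<Rightarrow> real \<Rightarrow> fqst" where
  "reroute T x y u d = T\<lparr>succ := (succ T)(x := y), flow := (flow T)(u := flow T u + d)\<rparr>"

lemma reroute_simps [simp]:
  "V (reroute T x y u d) = V T" "Zv (reroute T x y u d) = Zv T" "Sv (reroute T x y u d) = Sv T"
  "sink (reroute T x y u d) = sink T" "pos (reroute T x y u d) = pos T"
  "succ (reroute T x y u d) = (succ T)(x := y)"
  "flow (reroute T x y u d) = (flow T)(u := flow T u + d)"
  by (simp_all add: reroute_def)

lemma in_nbrs_reroute: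
  assumes "x \<in> V T" "x \<noteq> sink T"
  shows "in_nbrs (reroute T x y u d) z = in_nbrs T z - {x} \<union> (if z = y then {x} else {})"
  using assms by (auto simp: in_nbrs_def)

lemma cost_reroute:
  assumes "finite (V T)" "x \<in> V T" "x \<noteq> sink T" "u \<in> V T" "u \<noteq> sink T" "u \<noteq> x"
  shows "cost (reroute T x y u d) = cost T
    + flow T x * ((norm (pos T x - pos T y))\<^sup>2 - (norm (pos T x - pos T (succ T x)))\<^sup>2)
    + d * (norm (pos T u - pos T (succ T u)))\<^sup>2"
proof -
  have "cost (reroute T x y u d)
      = cost T + (\<Sum>w\<in>{x, u}. edge_cost (reroute T x y u d) w - edge_cost T w)"
    by (rule cost_local_change) (use assms in \<open>auto simp: edge_cost_def\<close>)
  then show ?thesis using assms(6) by (simp add: edge_cost_def algebra_simps)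
qed

lemma inflow_reroute:
  assumes "finite (V T)" "x \<in> V T" "x \<noteq> sink T" "u \<in> V T" "u \<noteq> sink T" "u \<noteq> x"
  shows "inflow (reroute T x y u d) z = inflow T z
    - (if z = succ T x then flow T x else 0) + (if z = y then flow T x else 0)
    + (if z = succ T u then d else 0)"
proof -
  let ?S = "in_nbrs T z - {x}"
  have fin: "finite ?S" using finite_in_nbrs[OF assms(1)] by simp
  have flow': "flow (reroute T x y u d) w = flow T w + (if w = u then d else 0)" for w
    by simp
  have "inflow (reroute T x y u d) z
      = (\<Sum>w\<in>?S. flow (reroute T x y u d) w) + (if z = y then flow T x else 0)"
  proof (cases "z = y")
    case True
    then have "in_nbrs (reroute T x y u d) z = insert x ?S"
      unfolding in_nbrs_reroute[OF assms(2,3)] by auto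
    then show ?thesis using fin True assms(6) unfolding inflow_def by (simp add: sum.insert_remove)
  qed (simp add: inflow_def in_nbrs_reroute[OF assms(2,3)])
  also have "(\<Sum>w\<in>?S. flow (reroute T x y u d) w)
      = (\<Sum>w\<in>?S. flow T w) + (if z = succ T u then d else 0)"
    unfolding flow' sum.distrib using fin assms(4-6) by (simp add: in_nbrs_iff)
  also have "(\<Sum>w\<in>?S. flow T w) = inflow T z - (if z = succ T x then flow T x else 0)"
    unfolding inflow_def
    using sum_diff1[OF finite_in_nbrs[OF assms(1), of z], of "flow T" x] assms(2,3)
    by (auto simp: in_nbrs_iff)
  finally show ?thesis by simp
qed

text \<open>The correction d on the out-edge of u must compensate, vertex by vertex, the flow of x
  that leaves succ x and enters y.\<close>
lemma fqst_reroute: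
  assumes T: "is_fqst Z zBS T" and x: "x \<in> V T" "x \<noteq> sink T"
    and y: "y \<in> V T" "y \<noteq> x" "depth T y \<le> depth T x"
    and u: "u \<in> V T" "u \<noteq> sink T" "u \<noteq> x" "0 < flow T u + d"
    and balance: "\<And>z. (if z = u then d else 0) + (if z = succ T x then flow T x else 0)
      = (if z = y then flow T x else 0) + (if z = succ T u then d else 0)"
  shows "is_fqst Z zBS (reroute T x y u d)"
proof (rule is_fqst_rewire[OF T])
  show "\<exists>m. (succ (reroute T x y u d) ^^ m) w = sink T" if "w \<in> V T" for w
    using reaches_sink_reattach[OF T x y that] by simp
  show "net_flow (reroute T x y u d) z = net_flow T z" for z
  proof -
    have "inflow (reroute T x y u d) z = inflow T z + (if z = u then d else 0)"
      using inflow_reroute[OF fqst_finite[OF T] x u(1-3), of y d z] balance[of z] by linarith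
    then show ?thesis using u(2) unfolding net_flow_def by auto
  qed
qed (use fqst_succ_in_V[OF T] fqst_flow_pos[OF T] y u in auto)

text \<open>In a feasible tree: v may lose one incident edge without violating the degree bound.\<close>
definition degree_slack :: "strategy \<Rightarrow> fqst \<Rightarrow> nat \<Rightarrow> bool" where
  "degree_slack s T v \<longleftrightarrow> (\<forall>\<phi>. s = DegreeBound \<phi> \<longrightarrow> \<not> (v \<in> Sv T \<and> degree T v = \<phi>))"

lemma feasible_reroute:
  assumes T: "is_fqst Z zBS T" and feas: "feasible s T"
    and x: "x \<in> V T" "x \<noteq> sink T" and y: "y \<noteq> succ T x"
    and slack: "degree_slack s T (succ T x)"
  shows "feasible s (reroute T x y u d)"
proof (cases s)
  case (DegreeBound \<phi>)
  have "\<phi> \<le> degree (reroute T x y u d) z" if z: "z \<in> Sv T" for z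
  proof -
    have deg: "\<phi> \<le> degree T z" using feas z DegreeBound by (simp add: feasible_def)
    have z_sink: "z \<noteq> sink T" using z fqst_sink_notin[OF T] by auto
    have fin: "finite (in_nbrs T z)" using finite_in_nbrs[OF fqst_finite[OF T]] .
    show ?thesis
    proof (cases "z = succ T x")
      case True
      have "in_nbrs (reroute T x y u d) z = in_nbrs T z - {x}" "x \<in> in_nbrs T z"
        using True y x by (auto simp: in_nbrs_reroute in_nbrs_iff)
      then have "card (in_nbrs (reroute T x y u d) z) = card (in_nbrs T z) - 1" by simp
      moreover have "degree T z \<noteq> \<phi>" using slack DegreeBound True z by (simp add: degree_slack_def)
      ultimately show ?thesis using deg z_sink unfolding degree_def by auto
    next
      case False
      then have "in_nbrs T z \<subseteq> in_nbrs (reroute T x y u d) z"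
        using x by (auto simp: in_nbrs_reroute in_nbrs_iff)
      then have "card (in_nbrs T z) \<le> card (in_nbrs (reroute T x y u d) z)"
        using fin by (intro card_mono) (auto simp: in_nbrs_reroute[OF x])
      then show ?thesis using deg z_sink unfolding degree_def by auto
    qed
  qed
  then show ?thesis using DegreeBound by (simp add: feasible_def)
qed (use feas in \<open>auto simp: feasible_def\<close>)

lemma strategy_cost_diff:
  "Sv T' = Sv T \<Longrightarrow> strategy_cost s T' - strategy_cost s T = cost T' - cost T"
  by (cases s) (auto simp: strategy_cost_def)

lemma MFQST_cost_le:
  assumes "is_MFQST Z zBS s T" "is_fqst Z zBS T'" "feasible s T'" "Sv T' = Sv T"
  shows "cost T \<le> cost T'"
  using assms strategy_cost_diff[OF assms(4), of s] unfolding is_MFQST_def by force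

lemma MFQST_of_cost_eq:
  assumes M: "is_MFQST Z zBS s T" and T': "is_fqst Z zBS T'" "feasible s T'"
    and "Sv T' = Sv T" "cost T' = cost T"
  shows "is_MFQST Z zBS s T'"
  using assms strategy_cost_diff[OF assms(4), of s] unfolding is_MFQST_def by force

lemma inner_pos_if_in_segment:
  fixes v w x :: "'a::real_inner"
  assumes "w \<in> closed_segment v x" "w \<noteq> v"
  shows "0 < inner (w - v) (x - v)"
proof -
  obtain t where t: "0 \<le> t" "w = (1 - t) *\<^sub>R v + t *\<^sub>R x"
    using assms(1) unfolding closed_segment_def by blast
  then have w_v: "w - v = t *\<^sub>R (x - v)" by (simp add: algebra_simps)
  with assms(2) have "t \<noteq> 0" "x \<noteq> v" by auto
  with t(1) show ?thesis unfolding w_v by (simp add: zero_less_mult_iff)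
qed

lemma norm_sq_lt_if_inner_pos:
  fixes v w x :: "'a::real_inner"
  assumes "0 < inner (x - v) (w - v)"
  shows "(norm (x - w))\<^sup>2 < (norm (x - v))\<^sup>2 + (norm (v - w))\<^sup>2"
  using assms dot_norm_neg[of "x - v" "w - v"] by (simp add: norm_minus_commute)

lemma norm_sq_add_lt_if_strictly_between:
  fixes v a b :: "'a::real_inner"
  assumes "a \<in> closed_segment v b" "a \<noteq> v" "a \<noteq> b"
  shows "(norm (b - a))\<^sup>2 + (norm (a - v))\<^sup>2 < (norm (b - v))\<^sup>2"
proof -
  obtain t where t: "0 \<le> t" "t \<le> 1" "a = (1 - t) *\<^sub>R v + t *\<^sub>R b"
    using assms(1) unfolding closed_segment_def by blast
  then have a_v: "a - v = t *\<^sub>R (b - v)" and b_a: "b - a = (1 - t) *\<^sub>R (b - v)"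
    by (simp_all add: algebra_simps)
  have "0 < inner (a - v) (b - v)" by (rule inner_pos_if_in_segment[OF assms(1,2)])
  moreover have "t \<noteq> 1" using assms(3) t(3) by auto
  ultimately have "0 < inner (b - a) (a - v)" using t(1,2)
    unfolding a_v b_a by (auto simp: zero_less_mult_iff)
  then show ?thesis using dot_norm[of "b - a" "a - v"] by simp
qed

lemma weighted_sum_sq_dist_decrease:
  fixes q :: "'i \<Rightarrow> 'a::real_inner"
  assumes fin: "finite A" and pos: "\<And>i. i \<in> A \<Longrightarrow> 0 < f i"
    and unbalanced: "(\<Sum>i\<in>A. f i *\<^sub>R (p - q i)) \<noteq> 0"
  obtains p' where "(\<Sum>i\<in>A. f i * (norm (p' - q i))\<^sup>2) < (\<Sum>i\<in>A. f i * (norm (p - q i))\<^sup>2)"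
proof -
  define G where "G = (\<Sum>i\<in>A. f i *\<^sub>R (p - q i))"
  define W where "W = (\<Sum>i\<in>A. f i)"
  define e where "e = (1 / W) *\<^sub>R G"
  have "A \<noteq> {}" using unbalanced by auto
  then have W: "0 < W" unfolding W_def using fin pos by (intro sum_pos) auto
  have "f i * (norm (p - e - q i))\<^sup>2
      = f i * (norm (p - q i))\<^sup>2 - 2 * inner (f i *\<^sub>R (p - q i)) e + f i * (norm e)\<^sup>2" for i
    by (simp add: power2_norm_eq_inner inner_diff_left inner_diff_right inner_commute algebra_simps)
  then have expand: "(\<Sum>i\<in>A. f i * (norm (p - e - q i))\<^sup>2)
      = (\<Sum>i\<in>A. f i * (norm (p - q i))\<^sup>2) - 2 * inner G e + W * (norm e)\<^sup>2"
    by (simp add: sum.distrib sum_subtractf inner_sum_left sum_distrib_left sum_distrib_right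
        G_def W_def)
  have "2 * inner G e - W * (norm e)\<^sup>2 = (norm G)\<^sup>2 / W"
    using W by (simp add: e_def power2_norm_eq_inner field_simps) (simp add: power2_eq_square)
  moreover have "0 < (norm G)\<^sup>2 / W" using W unbalanced by (simp add: G_def)
  ultimately show ?thesis using expand by (intro that[of "p - e"]) simp
qed

lemma fqst_move_steiner:
  assumes T: "is_fqst Z zBS T" and w: "w \<in> Sv T"
  shows "is_fqst Z zBS (T\<lparr>pos := (pos T)(w := p)\<rparr>)"
proof -
  let ?T' = "T\<lparr>pos := (pos T)(w := p)\<rparr>"
  have w_notin: "w \<notin> Zv T" "w \<noteq> sink T" using T w unfolding is_fqst_def by auto
  have same: "V ?T' = V T" "Zv ?T' = Zv T" "Sv ?T' = Sv T" "sink ?T' = sink T" "succ ?T' = succ T"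
    "flow ?T' = flow T" "in_nbrs ?T' = in_nbrs T" "pos ?T' ` Zv T = pos T ` Zv T"
    "inj_on (pos ?T') (Zv T) = inj_on (pos T) (Zv T)" "pos ?T' (sink T) = pos T (sink T)"
    using w_notin by (auto intro!: image_cong inj_on_cong simp: in_nbrs_def fun_eq_iff)
  show ?thesis unfolding is_fqst_def same by (rule T[unfolded is_fqst_def])
qed

lemma feasible_move: "feasible s (T\<lparr>pos := P\<rparr>) = feasible s T"
  by (cases s) (simp_all add: feasible_def degree_def in_nbrs_def)

lemma cost_move:
  assumes T: "is_fqst Z zBS T" and w: "w \<in> V T" "w \<noteq> sink T"
  shows "cost (T\<lparr>pos := (pos T)(w := p)\<rparr>) = cost T
    + flow T w * ((norm (p - pos T (succ T w)))\<^sup>2 - (norm (pos T w - pos T (succ T w)))\<^sup>2)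
    + (\<Sum>u\<in>in_nbrs T w. flow T u * ((norm (p - pos T u))\<^sup>2 - (norm (pos T w - pos T u))\<^sup>2))"
proof -
  let ?T' = "T\<lparr>pos := (pos T)(w := p)\<rparr>"
  have sw: "succ T w \<noteq> w" by (rule succ_neq_self[OF T w])
  then have w_notin: "w \<notin> in_nbrs T w" by (simp add: in_nbrs_iff)
  have "cost ?T' = cost T + (\<Sum>u\<in>insert w (in_nbrs T w). edge_cost ?T' u - edge_cost T u)"
  proof (rule cost_local_change)
    show "edge_cost ?T' u = edge_cost T u" if "u \<in> V T - {sink T} - insert w (in_nbrs T w)" for u
      using that by (auto simp: edge_cost_def in_nbrs_iff)
  qed (use fqst_finite[OF T] w in \<open>auto simp: in_nbrs_iff\<close>)
  moreover have "(\<Sum>u\<in>in_nbrs T w. edge_cost ?T' u - edge_cost T u)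
      = (\<Sum>u\<in>in_nbrs T w. flow T u * ((norm (p - pos T u))\<^sup>2 - (norm (pos T w - pos T u))\<^sup>2))"
    by (rule sum.cong)
      (use sw in \<open>auto simp: edge_cost_def in_nbrs_iff norm_minus_commute algebra_simps\<close>)
  ultimately show ?thesis
    using finite_in_nbrs[OF fqst_finite[OF T]] w_notin sw sw[symmetric]
    by (simp add: edge_cost_def algebra_simps)
qed

text \<open>First-order optimality of a Steiner point: otherwise moving it towards the weighted
  centroid of its neighbours lowers the cost and keeps the tree feasible.\<close>
lemma MFQST_steiner_balance:
  assumes M: "is_MFQST Z zBS s T" and w: "w \<in> Sv T"
  shows "flow T w *\<^sub>R (pos T w - pos T (succ T w))
    + (\<Sum>u\<in>in_nbrs T w. flow T u *\<^sub>R (pos T w - pos T u)) = 0"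
proof (rule ccontr)
  have T: "is_fqst Z zBS T" and feas: "feasible s T" using M unfolding is_MFQST_def by auto
  have wV: "w \<in> V T" "w \<noteq> sink T" using w fqst_vertices[OF T] fqst_sink_notin[OF T] by auto
  let ?A = "insert w (in_nbrs T w)"
  define q where "q u = pos T (if u = w then succ T w else u)" for u
  have fin: "finite (in_nbrs T w)" by (rule finite_in_nbrs[OF fqst_finite[OF T]])
  have w_notin: "w \<notin> in_nbrs T w" using succ_neq_self[OF T wV] by (simp add: in_nbrs_iff)
  have q_in: "q u = pos T u" if "u \<in> in_nbrs T w" for u
    using that w_notin by (auto simp: q_def)
  have sum_A: "(\<Sum>u\<in>?A. h u (q u)) = h w (pos T (succ T w)) + (\<Sum>u\<in>in_nbrs T w. h u (pos T u))"
    for h :: "nat \<Rightarrow> real^2 \<Rightarrow> 'b::comm_monoid_add"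
    unfolding sum.insert[OF fin w_notin] using q_in by (simp add: q_def)
  have pos: "0 < flow T u" if "u \<in> ?A" for u
    using that wV by (auto simp: in_nbrs_iff intro: fqst_flow_pos[OF T])
  assume "flow T w *\<^sub>R (pos T w - pos T (succ T w))
    + (\<Sum>u\<in>in_nbrs T w. flow T u *\<^sub>R (pos T w - pos T u)) \<noteq> 0"
  then have unbalanced: "(\<Sum>u\<in>?A. flow T u *\<^sub>R (pos T w - q u)) \<noteq> 0"
    unfolding sum_A[of "\<lambda>u z. flow T u *\<^sub>R (pos T w - z)"] .
  obtain p where p: "(\<Sum>u\<in>?A. flow T u * (norm (p - q u))\<^sup>2)
      < (\<Sum>u\<in>?A. flow T u * (norm (pos T w - q u))\<^sup>2)"
    by (rule weighted_sum_sq_dist_decrease[OF finite.insertI[OF fin] pos unbalanced])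
  let ?T' = "T\<lparr>pos := (pos T)(w := p)\<rparr>"
  have "cost ?T' = cost T + (\<Sum>u\<in>?A. flow T u * (norm (p - q u))\<^sup>2)
      - (\<Sum>u\<in>?A. flow T u * (norm (pos T w - q u))\<^sup>2)"
    unfolding sum_A[of "\<lambda>u z. flow T u * (norm (p - z))\<^sup>2"]
      sum_A[of "\<lambda>u z. flow T u * (norm (pos T w - z))\<^sup>2"] cost_move[OF T wV]
    by (simp add: right_diff_distrib sum_subtractf)
  with p have "cost ?T' < cost T" by simp
  moreover have "cost T \<le> cost ?T'"
    by (rule MFQST_cost_le[OF M fqst_move_steiner[OF T w]]) (simp_all add: feasible_move feas)
  ultimately show False by simp
qed

lemma not_MFQST_if_sibling_strictly_between:
  assumes slack: "degree_slack s T (succ T x)"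
    and x: "x \<in> V T" "x \<noteq> sink T" and y: "y \<in> V T" "y \<noteq> sink T" "y \<noteq> x"
    and siblings: "succ T y = succ T x"
    and between: "pos T y \<in> closed_segment (pos T (succ T x)) (pos T x)"
      "pos T y \<noteq> pos T (succ T x)" "pos T y \<noteq> pos T x"
  shows "\<not> is_MFQST Z zBS s T"
proof
  assume M: "is_MFQST Z zBS s T"
  then have T: "is_fqst Z zBS T" and feas: "feasible s T" unfolding is_MFQST_def by auto
  let ?T' = "reroute T x y y (flow T x)"
  have "depth T y = depth T x" using depth_succ[OF T x] depth_succ[OF T y(1,2)] siblings by simp
  then have "is_fqst Z zBS ?T'"
    using fqst_flow_pos[OF T x] fqst_flow_pos[OF T y(1,2)] y siblings
    by (intro fqst_reroute[OF T x]) auto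
  moreover have "feasible s ?T'"
    using succ_neq_self[OF T y(1,2)] siblings by (intro feasible_reroute[OF T feas x _ slack]) auto
  ultimately have optimal: "cost T \<le> cost ?T'" by (intro MFQST_cost_le[OF M]) auto
  have "flow T x * ((norm (pos T x - pos T y))\<^sup>2 + (norm (pos T y - pos T (succ T x)))\<^sup>2)
      < flow T x * (norm (pos T x - pos T (succ T x)))\<^sup>2"
    using norm_sq_add_lt_if_strictly_between[OF between] fqst_flow_pos[OF T x]
    by (intro mult_strict_left_mono) (simp_all add: norm_minus_commute)
  then have "cost ?T' < cost T"
    using cost_reroute[OF fqst_finite[OF T] x y, of y "flow T x"] siblings
    by (simp add: algebra_simps)
  with optimal show False by simp
qed

text \<open>Here rerouting does not change the cost, so the rerouted tree is optimal as well; the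
  balance condition at x in both trees then forces the edge from x to succ x to be degenerate.\<close>
lemma not_MFQST_if_coincident_steiner_sibling:
  assumes slack: "degree_slack s T (succ T x)"
    and x: "x \<in> Sv T" and y: "y \<in> V T" "y \<noteq> sink T" "y \<noteq> x"
    and siblings: "succ T y = succ T x"
    and coincide: "pos T x = pos T y" and nondeg: "pos T x \<noteq> pos T (succ T x)"
  shows "\<not> is_MFQST Z zBS s T"
proof
  assume M: "is_MFQST Z zBS s T"
  then have T: "is_fqst Z zBS T" and feas: "feasible s T" unfolding is_MFQST_def by auto
  have xV: "x \<in> V T" "x \<noteq> sink T" using x fqst_vertices[OF T] fqst_sink_notin[OF T] by auto
  let ?T' = "reroute T x y y (flow T x)"
  have "depth T y = depth T x" using depth_succ[OF T xV] depth_succ[OF T y(1,2)] siblings by simp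
  then have "is_fqst Z zBS ?T'"
    using fqst_flow_pos[OF T xV] fqst_flow_pos[OF T y(1,2)] y siblings
    by (intro fqst_reroute[OF T xV]) auto
  moreover have "feasible s ?T'"
    using succ_neq_self[OF T y(1,2)] siblings by (intro feasible_reroute[OF T feas xV _ slack]) auto
  moreover have "cost ?T' = cost T"
    using cost_reroute[OF fqst_finite[OF T] xV y, of y "flow T x"] siblings coincide by simp
  ultimately have M': "is_MFQST Z zBS s ?T'" by (intro MFQST_of_cost_eq[OF M]) auto
  let ?S = "\<Sum>u\<in>in_nbrs T x. flow T u *\<^sub>R (pos T x - pos T u)"
  have x_notin: "x \<notin> in_nbrs T x" and y_notin: "y \<notin> in_nbrs T x"
    using succ_neq_self[OF T xV] siblings by (auto simp: in_nbrs_iff)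
  have "in_nbrs ?T' x = in_nbrs T x"
    using x_notin y(3) by (simp add: in_nbrs_reroute[OF xV])
  moreover have "flow ?T' u = flow T u" if "u \<in> in_nbrs T x" for u
    using that y_notin by auto
  ultimately have "flow T x *\<^sub>R (pos T x - pos T y) + ?S = 0"
    using MFQST_steiner_balance[OF M', of x] x y(3) by simp
  then have "?S = 0" using coincide by simp
  moreover have "flow T x *\<^sub>R (pos T x - pos T (succ T x)) + ?S = 0"
    by (rule MFQST_steiner_balance[OF M x])
  ultimately show False using nondeg fqst_flow_pos[OF T xV] by simp
qed

lemma only_child_if_flow_le:
  assumes T: "is_fqst Z zBS T" and x: "x \<in> V T" "x \<noteq> sink T"
    and v: "succ T x \<noteq> sink T" and flow_le: "flow T (succ T x) \<le> flow T x"
  shows "succ T x \<in> Sv T" "in_nbrs T (succ T x) = {x}" "flow T (succ T x) = flow T x"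
proof -
  let ?v = "succ T x"
  have vV: "?v \<in> V T" by (rule fqst_succ_in_V[OF T x])
  have fin: "finite (in_nbrs T ?v)" by (rule finite_in_nbrs[OF fqst_finite[OF T]])
  have x_in: "x \<in> in_nbrs T ?v" using x by (simp add: in_nbrs_iff)
  have others_pos: "0 < flow T u" if "u \<in> in_nbrs T ?v" for u
    using that fqst_flow_pos[OF T] by (simp add: in_nbrs_iff)
  have inflow: "(\<Sum>u\<in>in_nbrs T ?v. flow T u) = flow T x + (\<Sum>u\<in>in_nbrs T ?v - {x}. flow T u)"
    using sum.remove[OF fin x_in] .
  moreover have rest: "0 \<le> (\<Sum>u\<in>in_nbrs T ?v - {x}. flow T u)"
    using others_pos by (intro sum_nonneg) (auto intro: less_imp_le)
  ultimately have "?v \<notin> Zv T" using fqst_source_flow[OF T, of ?v] flow_le by auto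
  then show v_steiner: "?v \<in> Sv T" using vV v fqst_vertices[OF T] by auto
  then have "(\<Sum>u\<in>in_nbrs T ?v - {x}. flow T u) = 0"
    using fqst_steiner_flow[OF T] inflow rest flow_le by fastforce
  then have "in_nbrs T ?v - {x} = {}"
    using sum_pos[of "in_nbrs T ?v - {x}" "flow T"] fin others_pos by auto
  then show "in_nbrs T ?v = {x}" using x_in by auto
  then show "flow T ?v = flow T x" using fqst_steiner_flow[OF T v_steiner] by simp
qed

lemma not_MFQST_if_shortcut:
  assumes slack: "degree_slack s T (succ T x)"
    and x: "x \<in> V T" "x \<noteq> sink T" and v: "succ T x \<noteq> sink T"
    and acute: "0 < inner (pos T x - pos T (succ T x)) (pos T (succ T (succ T x)) - pos T (succ T x))"
  shows "\<not> is_MFQST Z zBS s T"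
proof
  assume M: "is_MFQST Z zBS s T"
  then have T: "is_fqst Z zBS T" and feas: "feasible s T" unfolding is_MFQST_def by auto
  let ?v = "succ T x" and ?w = "succ T (succ T x)"
  have vV: "?v \<in> V T" "?v \<noteq> sink T" "?v \<noteq> x"
    using fqst_succ_in_V[OF T x] v succ_neq_self[OF T x] by auto
  show False
  proof (cases "flow T x < flow T ?v")
    case True
    let ?T' = "reroute T x ?w ?v (- flow T x)"
    have depth: "depth T x = Suc (Suc (depth T ?w))"
      using depth_succ[OF T x] depth_succ[OF T vV(1,2)] by simp
    have "is_fqst Z zBS ?T'"
      using fqst_succ_in_V[OF T vV(1,2)] depth vV True by (intro fqst_reroute[OF T x]) auto
    moreover have "feasible s ?T'"
      using succ_neq_self[OF T vV(1,2)] by (intro feasible_reroute[OF T feas x _ slack]) auto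
    ultimately have optimal: "cost T \<le> cost ?T'" by (intro MFQST_cost_le[OF M]) auto
    have "flow T x * (norm (pos T x - pos T ?w))\<^sup>2
        < flow T x * ((norm (pos T x - pos T ?v))\<^sup>2 + (norm (pos T ?v - pos T ?w))\<^sup>2)"
      using norm_sq_lt_if_inner_pos[OF acute] fqst_flow_pos[OF T x]
      by (intro mult_strict_left_mono) simp_all
    then have "cost ?T' < cost T"
      using cost_reroute[OF fqst_finite[OF T] x vV, of ?w "- flow T x"]
      by (simp add: algebra_simps)
    with optimal show False by simp
  next
    case False
    then have child: "?v \<in> Sv T" "in_nbrs T ?v = {x}" "flow T ?v = flow T x"
      using only_child_if_flow_le[OF T x v] by auto
    have "flow T x *\<^sub>R ((pos T ?v - pos T ?w) + (pos T ?v - pos T x)) = 0"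
      using MFQST_steiner_balance[OF M child(1)] child(2,3) by (simp only: scaleR_right_distrib) simp
    then have "(pos T ?v - pos T ?w) + (pos T ?v - pos T x) = 0"
      using fqst_flow_pos[OF T x] by simp
    then have "pos T ?w - pos T ?v = - (pos T x - pos T ?v)"
      by (simp add: algebra_simps eq_neg_iff_add_eq_0)
    then have "inner (pos T x - pos T ?v) (pos T ?w - pos T ?v)
        = - inner (pos T x - pos T ?v) (pos T x - pos T ?v)"
      by (simp only: inner_minus_right)
    with acute inner_ge_zero[of "pos T x - pos T ?v"] show False by linarith
  qed
qed

lemma nondegenerate_edge:
  "\<not> degenerate T \<Longrightarrow> u \<in> V T \<Longrightarrow> u \<noteq> sink T \<Longrightarrow> pos T u \<noteq> pos T (succ T u)"
  unfolding degenerate_def by blast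

lemma not_MFQST_if_nested_siblings:
  assumes T: "is_fqst Z zBS T" and nondeg: "\<not> degenerate T" and slack: "degree_slack s T v"
    and a: "a \<in> V T" "a \<noteq> sink T" "succ T a = v" and b: "b \<in> V T" "b \<noteq> sink T" "succ T b = v"
    and "a \<noteq> b" and nested: "pos T a \<in> closed_segment (pos T v) (pos T b)"
  shows "\<not> is_MFQST Z zBS s T"
proof (cases "pos T a = pos T b")
  case True
  have "a \<in> Sv T \<or> b \<in> Sv T"
    using fqst_vertices[OF T] fqst_inj_sources[OF T] a b \<open>a \<noteq> b\<close> True
    by (auto dest: inj_onD)
  then show ?thesis
  proof
    assume "a \<in> Sv T"
    then show ?thesis using not_MFQST_if_coincident_steiner_sibling[of s T a b] slack
        a b \<open>a \<noteq> b\<close> True nondegenerate_edge[OF nondeg a(1,2)] by auto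
  next
    assume "b \<in> Sv T"
    then show ?thesis using not_MFQST_if_coincident_steiner_sibling[of s T b a] slack
        a b \<open>a \<noteq> b\<close> True nondegenerate_edge[OF nondeg b(1,2)] by auto
  qed
next
  case False
  then show ?thesis using not_MFQST_if_sibling_strictly_between[of s T b a] slack
      a b \<open>a \<noteq> b\<close> nested nondegenerate_edge[OF nondeg a(1,2)] by auto
qed

theorem mainTheorem5:
  fixes Z :: "(real^2) set" and zBS :: "real^2" and s :: strategy and T :: fqst and v :: nat
  assumes "finite Z" and "card Z \<ge> 1" and "zBS \<notin> Z"
    and "valid_strategy s"
    and "is_fqst Z zBS T" and "\<not> degenerate T" and "feasible s T"
    and "overlapping_at T v"
    and "(\<forall>\<phi>. s = DegreeBound \<phi> \<longrightarrow> \<not> (v \<in> Sv T \<and> degree T v = \<phi>))"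
  shows "\<not> is_MFQST Z zBS s T"
proof -
  note T = assms(5) and nondeg = assms(6)
  have slack: "degree_slack s T v" using assms(9) by (simp add: degree_slack_def)
  obtain a b where "a \<noteq> b" "adjacent T a v" "adjacent T b v"
    and nested: "pos T a \<in> closed_segment (pos T v) (pos T b)"
    using assms(8) unfolding overlapping_at_def by (auto simp: subset_iff)
  then consider
      (siblings) "a \<in> V T" "a \<noteq> sink T" "succ T a = v" "b \<in> V T" "b \<noteq> sink T" "succ T b = v"
    | (inner_parent) "v \<in> V T" "v \<noteq> sink T" "succ T v = a" "b \<in> V T" "b \<noteq> sink T" "succ T b = v"
    | (outer_parent) "a \<in> V T" "a \<noteq> sink T" "succ T a = v" "v \<noteq> sink T" "succ T v = b"
    unfolding adjacent_def by auto
  then show ?thesis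
  proof cases
    case siblings
    then show ?thesis using not_MFQST_if_nested_siblings[OF T nondeg slack] \<open>a \<noteq> b\<close> nested by blast
  next
    case inner_parent
    have "0 < inner (pos T b - pos T v) (pos T a - pos T v)"
      using inner_pos_if_in_segment[OF nested] nondegenerate_edge[OF nondeg inner_parent(1,2)]
        inner_parent(3) by (simp add: inner_commute)
    then show ?thesis using not_MFQST_if_shortcut[of s T b] slack inner_parent by auto
  next
    case outer_parent
    have "0 < inner (pos T a - pos T v) (pos T b - pos T v)"
      using inner_pos_if_in_segment[OF nested] nondegenerate_edge[OF nondeg outer_parent(1,2)]
        outer_parent(3) by simp
    then show ?thesis using not_MFQST_if_shortcut[of s T a] slack outer_parent by auto
  qed
qed

end
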